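(* Let $\mathcal{S}\subseteq\mathbb{R}^n$ and consider a system $\dot x=f(x)$, $y=h(x)$ with $h$ continuous, such that $\mathcal{S}$ is forward invariant, every solution starting in $\mathcal{S}$ is defined for all $t\ge0$, and every such solution converges as $t\to\infty$ to an equilibrium (a point $\bar x\in\mathcal{S}$ with $f(\bar x)=0$). Let $E$ denote the set of equilibria in $\mathcal{S}$. Then the system is detectable on $\mathcal{S}$ if and only if: for all $\bar x,\bar z\in E$, $h(\bar x)=h(\bar z)$ implies $\bar x=\bar z$.
   Context: The system is called detectable (on $\mathcal{S}$) if for every two trajectories $x(\cdot)$ and $z(\cdot)$ in $\mathcal{S}$ defined for all $t\ge 0$, $h(x(t))\equiv h(z(t))$ implies $|x(t)-z(t)|\to0$ as $t\to\infty$. Here $|\cdot|$ is the Euclidean norm. *)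

theory Defs
  imports "HOL-Analysis.Analysis"
begin

definition is_solution :: "(real^'n \<Rightarrow> real^'n) \<Rightarrow> (real \<Rightarrow> real^'n) \<Rightarrow> bool" where
  "is_solution f x \<longleftrightarrow>
     (\<forall>t\<ge>0. (x has_vector_derivative f (x t)) (at t within {0..}))"

definition trajectory_in :: "(real^'n \<Rightarrow> real^'n) \<Rightarrow> (real^'n) set \<Rightarrow> (real \<Rightarrow> real^'n) \<Rightarrow> bool" where
  "trajectory_in f S x \<longleftrightarrow> is_solution f x \<and> (\<forall>t\<ge>0. x t \<in> S)"

definition detectable_on ::
  "(real^'n \<Rightarrow> real^'n) \<Rightarrow> (real^'n \<Rightarrow> 'b) \<Rightarrow> (real^'n) set \<Rightarrow> bool" where
  "detectable_on f h S \<longleftrightarrow>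
     (\<forall>x z. trajectory_in f S x \<and> trajectory_in f S z \<and> (\<forall>t\<ge>0. h (x t) = h (z t))
        \<longrightarrow> ((\<lambda>t. norm (x t - z t)) \<longlongrightarrow> 0) at_top)"

definition equilibria :: "(real^'n \<Rightarrow> real^'n) \<Rightarrow> (real^'n) set \<Rightarrow> (real^'n) set" where
  "equilibria f S = {xb \<in> S. f xb = 0}"

end

theory Submission
  imports Defs
begin

text \<open>Equilibria are constant trajectories, so detectability forces equilibria with equal
  outputs to coincide. Conversely, if two trajectories have equal outputs, their limiting
  equilibria have equal outputs by continuity of \<open>h\<close>; injectivity of \<open>h\<close> on the equilibria
  makes the limits equal, and hence the difference of the trajectories tends to \<open>0\<close>.\<close>

lemma trajectory_in_const_equilibrium:
  assumes "c \<in> equilibria f S"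
  shows "trajectory_in f S (\<lambda>t. c)"
  using assms unfolding trajectory_in_def is_solution_def equilibria_def
  by (auto intro: has_vector_derivative_const)

lemma inj_on_equilibria_if_detectable_on:
  assumes "detectable_on f h S"
  shows "inj_on h (equilibria f S)"
proof (rule inj_onI)
  fix xb zb assume xb: "xb \<in> equilibria f S" and zb: "zb \<in> equilibria f S" and "h xb = h zb"
  then have "((\<lambda>t::real. norm (xb - zb)) \<longlongrightarrow> 0) at_top"
    using assms trajectory_in_const_equilibrium[OF xb] trajectory_in_const_equilibrium[OF zb]
    unfolding detectable_on_def by auto
  then have "norm (xb - zb) = 0"
    by (simp add: tendsto_const_iff)
  then show "xb = zb" by simp
qed

lemma image_limits_eq_if_eventually_image_eq:
  fixes h :: "'a::t2_space \<Rightarrow> 'b::t2_space"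
  assumes "F \<noteq> bot" "(x \<longlongrightarrow> a) F" "(z \<longlongrightarrow> b) F" "isCont h a" "isCont h b"
    and "eventually (\<lambda>t. h (x t) = h (z t)) F"
  shows "h a = h b"
proof (rule tendsto_unique[OF \<open>F \<noteq> bot\<close>])
  show "((\<lambda>t. h (x t)) \<longlongrightarrow> h a) F"
    using assms(2,4) by (rule isCont_tendsto_compose[rotated])
  have "((\<lambda>t. h (z t)) \<longlongrightarrow> h b) F"
    using assms(3,5) by (rule isCont_tendsto_compose[rotated])
  then show "((\<lambda>t. h (x t)) \<longlongrightarrow> h b) F"
    using tendsto_cong[OF assms(6)] by simp
qed

lemma detectable_on_if_inj_on_equilibria:
  fixes h :: "real^'n \<Rightarrow> 'b::t2_space"
  assumes h_cont: "continuous_on UNIV h"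
    and converge: "\<And>x. is_solution f x \<Longrightarrow> x 0 \<in> S \<Longrightarrow>
                      \<exists>xb \<in> equilibria f S. (x \<longlongrightarrow> xb) at_top"
    and inj: "inj_on h (equilibria f S)"
  shows "detectable_on f h S"
  unfolding detectable_on_def
proof (intro allI impI, elim conjE)
  fix x z assume tx: "trajectory_in f S x" and tz: "trajectory_in f S z"
    and same_output: "\<forall>t\<ge>0. h (x t) = h (z t)"
  obtain xb where xb: "xb \<in> equilibria f S" and lim_x: "(x \<longlongrightarrow> xb) at_top"
    using converge[of x] tx unfolding trajectory_in_def by auto
  obtain zb where zb: "zb \<in> equilibria f S" and lim_z: "(z \<longlongrightarrow> zb) at_top"
    using converge[of z] tz unfolding trajectory_in_def by auto
  have eventually_same_output: "eventually (\<lambda>t. h (x t) = h (z t)) (at_top :: real filter)"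
    using eventually_ge_at_top[of 0] by eventually_elim (simp add: same_output)
  have h_isCont: "isCont h p" for p
    using h_cont by (simp add: continuous_on_eq_continuous_at)
  have "h xb = h zb"
    by (rule image_limits_eq_if_eventually_image_eq[OF trivial_limit_at_top_linorder
          lim_x lim_z h_isCont h_isCont eventually_same_output])
  then have "xb = zb"
    using inj xb zb by (auto dest: inj_onD)
  then have "((\<lambda>t. x t - z t) \<longlongrightarrow> 0) at_top"
    using tendsto_diff[OF lim_x lim_z] by simp
  then show "((\<lambda>t. norm (x t - z t)) \<longlongrightarrow> 0) at_top"
    by (rule tendsto_norm_zero)
qed

theorem lemma1p4:
  fixes f :: "real^'n \<Rightarrow> real^'n" and h :: "real^'n \<Rightarrow> real^'m"
    and S :: "(real^'n) set"
  assumes h_cont: "continuous_on UNIV h"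
    and fwd_inv: "\<And>x. is_solution f x \<Longrightarrow> x 0 \<in> S \<Longrightarrow> \<forall>t\<ge>0. x t \<in> S"
    and exists: "\<And>x0. x0 \<in> S \<Longrightarrow> \<exists>x. is_solution f x \<and> x 0 = x0"
    and converge: "\<And>x. is_solution f x \<Longrightarrow> x 0 \<in> S \<Longrightarrow>
                      \<exists>xb \<in> equilibria f S. (x \<longlongrightarrow> xb) at_top"
  shows "detectable_on f h S \<longleftrightarrow>
         (\<forall>xb \<in> equilibria f S. \<forall>zb \<in> equilibria f S. h xb = h zb \<longrightarrow> xb = zb)"
  using inj_on_equilibria_if_detectable_on
    detectable_on_if_inj_on_equilibria[OF h_cont converge]
  unfolding inj_on_def by blast

end
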